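(* Let $p\neq0$ and let $\lambda,\mu$ be nonzero finite Borel measures on $\mathbb{S}^{n-1}$. Then a convex body $K\in\mathcal{K}^n_0$ is a solution of the maximization problem $\sup\{\Phi_{\lambda,\mu,p}(\rho_L):L\in\mathcal{K}^n_0\}$ if and only if $\rho_K$ is a solution of the maximization problem $\sup\{\Phi_{\lambda,\mu,p}(f):f\in C^+(\mathbb{S}^{n-1})\}$.
   Context: $\mathcal{K}^n_0$ is the set of compact convex subsets of $\mathbb{R}^n$ containing the origin in their interior; for $K\in\mathcal{K}^n_0$, $h_K(x)=\max_{y\in K}\langle y,x\rangle$ and $\rho_K(u)=\max\{t>0:tu\in K\}$. $C^+(\mathbb{S}^{n-1})$ denotes the positive continuous functions on $\mathbb{S}^{n-1}$. For $f\in C^+(\mathbb{S}^{n-1})$, $\langle f\rangle=\mathrm{conv}\{f(u)u:u\in\mathbb{S}^{n-1}\}$. For a measure $\nu$, $|\nu|$ denotes its total mass. The functional is $$\Phi_{\lambda,\mu,p}(f)=-\frac{1}{|\lambda|}\int_{\mathbb{S}^{n-1}}\log h_{\langle f\rangle}(x)\,d\lambda(x)-\frac1p\log\Big(\frac{1}{|\mu|}\int_{\mathbb{S}^{n-1}}f^{-p}(u)\,d\mu(u)\Big).$$ *)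

theory Defs
  imports "HOL-Analysis.Analysis" "HOL-Probability.Probability"
begin

abbreviation Sph :: "'a::euclidean_space set" where
  "Sph \<equiv> sphere 0 1"

definition convex_bodies_0 :: "'a::euclidean_space set set" where
  "convex_bodies_0 = {K. compact K \<and> convex K \<and> 0 \<in> interior K}"

definition supp_fun :: "'a::euclidean_space set \<Rightarrow> 'a \<Rightarrow> real" where
  "supp_fun K x = (SUP y\<in>K. y \<bullet> x)"

definition radial_fun :: "'a::euclidean_space set \<Rightarrow> 'a \<Rightarrow> real" where
  "radial_fun K u = Sup {t. t > 0 \<and> t *\<^sub>R u \<in> K}"

text \<open>Positive continuous functions on the sphere (values off the sphere are irrelevant).\<close>
definition Cplus :: "('a::euclidean_space \<Rightarrow> real) set" where
  "Cplus = {f. continuous_on Sph f \<and> (\<forall>u\<in>Sph. f u > 0)}"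

definition wulff :: "('a::euclidean_space \<Rightarrow> real) \<Rightarrow> 'a set" where
  "wulff f = convex hull ((\<lambda>u. f u *\<^sub>R u) ` Sph)"

definition sphere_measure :: "'a::euclidean_space measure \<Rightarrow> bool" where
  "sphere_measure M \<longleftrightarrow> sets M = sets (restrict_space borel Sph) \<and> finite_measure M
     \<and> emeasure M (space M) \<noteq> 0"

definition Phi :: "'a::euclidean_space measure \<Rightarrow> 'a measure \<Rightarrow> real \<Rightarrow> ('a \<Rightarrow> real) \<Rightarrow> real" where
  "Phi lam mu p f =
     - (1 / measure lam (space lam)) * (\<integral>x. ln (supp_fun (wulff f) x) \<partial>lam)
     - (1 / p) * ln ((1 / measure mu (space mu)) * (\<integral>u. f u powr (- p) \<partial>mu))"

end

theory Submission
  imports Defs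
begin

(* Phi depends on f only through the Wulff shape <f> and through the L^(-p) mean of f,
   and the mean term is monotone in f for either sign of p. Since <rho_L> = L for every
   convex body L and f <= rho_<f> on the sphere, Phi f <= Phi rho_<f>: every value of Phi
   on C^+ is dominated by a value on a radial function, and radial functions of convex
   bodies lie in C^+. *)

lemma integrable_continuous_on_compact:
  fixes g :: "'a::topological_space \<Rightarrow> real"
  assumes "finite_measure M" and sets: "sets M = sets (restrict_space borel S)"
    and "compact S" and "continuous_on S g"
  shows "integrable M g"
proof -
  interpret finite_measure M by fact
  have space: "space M = S"
    using sets_eq_imp_space_eq[OF sets] by (simp add: space_restrict_space)
  have "g \<in> borel_measurable M"
    using measurable_cong_sets[OF sets refl] borel_measurable_continuous_on_restrict[OF assms(4)]
    by blast
  moreover obtain B where "\<forall>x\<in>S. norm (g x) \<le> B"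
    using compact_imp_bounded[OF compact_continuous_image[OF assms(4,3)]]
    by (auto simp: bounded_iff)
  ultimately show ?thesis
    using space by (intro integrable_const_bound[where B=B]) auto
qed

lemma integral_pos_continuous_on_compact:
  fixes g :: "'a::topological_space \<Rightarrow> real"
  assumes "finite_measure M" and sets: "sets M = sets (restrict_space borel S)"
    and "emeasure M (space M) \<noteq> 0"
    and "compact S" and "continuous_on S g" and pos: "\<forall>x\<in>S. 0 < g x"
  shows "0 < integral\<^sup>L M g"
proof -
  interpret finite_measure M by fact
  have space: "space M = S"
    using sets_eq_imp_space_eq[OF sets] by (simp add: space_restrict_space)
  then have "S \<noteq> {}"
    using assms(3) by auto
  then obtain v where v: "v \<in> S" "\<forall>x\<in>S. g v \<le> g x"
    using continuous_attains_inf[OF assms(4) _ assms(5)] by blast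
  have "0 < measure M (space M)"
    using assms(3) by (simp add: zero_less_measure_iff emeasure_eq_measure)
  then have "0 < g v * measure M (space M)"
    using pos v(1) by simp
  also have "\<dots> = integral\<^sup>L M (\<lambda>_. g v)"
    by simp
  also have "\<dots> \<le> integral\<^sup>L M g"
    using v space integrable_continuous_on_compact[OF assms(1,2,4,5)] by (intro integral_mono) auto
  finally show ?thesis .
qed

lemma scaleR_in_interior_convex:
  fixes K :: "'a::euclidean_space set"
  assumes "convex K" and "0 \<in> interior K" and "s *\<^sub>R x \<in> K" and "0 \<le> t" and "t < s"
  shows "t *\<^sub>R x \<in> interior K"
proof (cases "t = 0 \<or> x = 0")
  case True
  then show ?thesis using assms(2) by auto
next
  case False
  then have "t *\<^sub>R x \<in> open_segment 0 (s *\<^sub>R x)"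
    using assms(4,5) unfolding in_segment
    by (intro conjI exI[of _ "t / s"]) auto
  then show ?thesis
    using in_interior_closure_convex_segment[OF assms(1,2)] assms(3) closure_subset by blast
qed

lemma frontier_ray_maximal:
  fixes K :: "'a::euclidean_space set"
  assumes "convex K" and "0 \<in> interior K"
    and "s *\<^sub>R x \<in> frontier K" and "0 \<le> s" and "t *\<^sub>R x \<in> K"
  shows "t \<le> s"
  using scaleR_in_interior_convex[OF assms(1,2,5,4)] assms(3)
  by (metis DiffD2 frontier_def not_le_imp_less)

lemma convex_bodies_0D:
  assumes "K \<in> convex_bodies_0"
  shows "compact K" "convex K" "0 \<in> interior K"
  using assms unfolding convex_bodies_0_def by simp_all

lemma radial_fun_eq_iff_frontier:
  fixes K :: "'a::euclidean_space set"
  assumes K: "K \<in> convex_bodies_0" and "u \<noteq> 0"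
  shows "radial_fun K u = k \<longleftrightarrow> 0 < k \<and> k *\<^sub>R u \<in> frontier K"
proof -
  note K = convex_bodies_0D[OF K]
  have frontier_sub: "frontier K \<subseteq> K"
    using K(1) by (simp add: compact_imp_closed frontier_subset_closed)
  obtain d where d: "0 < d" "d *\<^sub>R u \<in> frontier K"
    using ray_to_frontier[OF compact_imp_bounded[OF K(1)] K(3) assms(2)] by auto
  have max: "t \<le> d" if "t *\<^sub>R u \<in> K" for t
    using frontier_ray_maximal[OF K(2,3) d(2) _ that] d(1) by simp
  have "radial_fun K u = d"
    unfolding radial_fun_def using d frontier_sub max by (intro cSup_eq_maximum) auto
  moreover have "k = d" if "0 < k" "k *\<^sub>R u \<in> frontier K"
    using that max frontier_ray_maximal[OF K(2,3) that(2) _ d(2)[THEN subsetD[OF frontier_sub]]]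
      frontier_sub by (simp add: antisym subset_iff)
  ultimately show ?thesis
    using d by auto
qed

lemma radial_fun_gt_0:
  fixes K :: "'a::euclidean_space set"
  assumes "K \<in> convex_bodies_0" and "u \<noteq> 0"
  shows "0 < radial_fun K u"
  using radial_fun_eq_iff_frontier[OF assms] by blast

lemma radial_fun_scaleR_in_frontier:
  fixes K :: "'a::euclidean_space set"
  assumes "K \<in> convex_bodies_0" and "u \<noteq> 0"
  shows "radial_fun K u *\<^sub>R u \<in> frontier K"
  using radial_fun_eq_iff_frontier[OF assms] by blast

lemma le_radial_fun:
  fixes K :: "'a::euclidean_space set"
  assumes K: "K \<in> convex_bodies_0" and "u \<noteq> 0" and "t *\<^sub>R u \<in> K"
  shows "t \<le> radial_fun K u"
  using frontier_ray_maximal[OF convex_bodies_0D(2,3)[OF K]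
      radial_fun_scaleR_in_frontier[OF assms(1,2)] _ assms(3)]
    radial_fun_gt_0[OF assms(1,2)]
  by simp

lemma continuous_on_radial_fun:
  fixes K :: "'a::euclidean_space set"
  assumes K: "K \<in> convex_bodies_0"
  shows "continuous_on (UNIV - {0}) (radial_fun K)"
proof -
  have "continuous_on (UNIV - {0}) (\<lambda>x. radial_fun K x *\<^sub>R x)"
    using compact_frontier[OF convex_bodies_0D(1)[OF K]] convex_bodies_0D(3)[OF K]
      radial_fun_eq_iff_frontier[OF K]
    by (intro continuous_on_compact_surface_projection[OF _ _ cone_univ])
      (auto simp: frontier_def)
  then have "continuous_on (UNIV - {0}) (\<lambda>x. norm (radial_fun K x *\<^sub>R x) / norm x)"
    by (intro continuous_on_divide continuous_on_norm continuous_on_id) auto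
  moreover have "norm (radial_fun K x *\<^sub>R x) / norm x = radial_fun K x" if "x \<in> UNIV - {0}" for x
    using radial_fun_gt_0[OF K, of x] that by simp
  ultimately show ?thesis
    by (rule continuous_on_eq)
qed

lemma radial_fun_in_Cplus:
  fixes K :: "'a::euclidean_space set"
  assumes "K \<in> convex_bodies_0"
  shows "radial_fun K \<in> Cplus"
proof -
  have "Sph \<subseteq> UNIV - {0 :: 'a}"
    by auto
  then show ?thesis
    unfolding Cplus_def
    using continuous_on_subset[OF continuous_on_radial_fun[OF assms]] radial_fun_gt_0[OF assms]
    by auto
qed

lemma sphere_polar_decomposition:
  fixes x :: "'a::euclidean_space"
  obtains u where "u \<in> Sph" and "norm x *\<^sub>R u = x"
proof (cases "x = 0")
  case True
  obtain u :: 'a where "norm u = 1"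
    using vector_choose_size zero_le_one by blast
  then show ?thesis
    using True that by simp
next
  case False
  then show ?thesis
    using that[of "sgn x"] by (simp add: norm_sgn sgn_div_norm)
qed

lemma scaleR_in_wulff:
  fixes f :: "'a::euclidean_space \<Rightarrow> real"
  assumes pos: "\<forall>v\<in>Sph. 0 < f v" and u: "u \<in> Sph" and "0 \<le> t" and "t \<le> f u"
  shows "t *\<^sub>R u \<in> wulff f"
proof -
  have vertex: "f v *\<^sub>R v \<in> wulff f" if "v \<in> Sph" for v
    unfolding wulff_def using that by (intro hull_inc imageI)
  have convex: "convex (wulff f)"
    unfolding wulff_def by simp
  have "-u \<in> Sph"
    using u by simp
  then have fu: "0 < f u" "0 < f (-u)"
    using pos u by auto
  \<comment> \<open>the origin is a convex combination of the antipodal generators at u and -u\<close>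
  define a where "a = f (-u) / (f u + f (-u))"
  have a: "0 \<le> a" "0 \<le> 1 - a"
    using fu unfolding a_def by (auto simp: divide_simps)
  have "a * f u - (1 - a) * f (-u) = 0"
    using fu unfolding a_def by (simp add: divide_simps)
  then have "a *\<^sub>R (f u *\<^sub>R u) + (1 - a) *\<^sub>R (f (-u) *\<^sub>R -u) = 0"
    by (simp add: algebra_simps flip: scaleR_left_diff_distrib)
  moreover have "a *\<^sub>R (f u *\<^sub>R u) + (1 - a) *\<^sub>R (f (-u) *\<^sub>R -u) \<in> wulff f"
    by (rule convexD[OF convex vertex[OF u] vertex[OF \<open>-u \<in> Sph\<close>] a]) simp
  ultimately have zero: "0 \<in> wulff f"
    by metis
  have "(1 - t / f u) *\<^sub>R 0 + (t / f u) *\<^sub>R (f u *\<^sub>R u) \<in> wulff f"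
    using assms fu by (intro convexD[OF convex zero vertex[OF u]]) auto
  then show ?thesis
    using fu by simp
qed

lemma wulff_in_convex_bodies_0:
  fixes f :: "'a::euclidean_space \<Rightarrow> real"
  assumes f: "f \<in> Cplus"
  shows "wulff f \<in> convex_bodies_0"
proof -
  have cont: "continuous_on Sph f" and pos: "\<forall>u\<in>Sph. 0 < f u"
    using f unfolding Cplus_def by auto
  have "compact (wulff f)"
    unfolding wulff_def using cont
    by (intro compact_convex_hull compact_continuous_image continuous_intros compact_sphere)
  obtain w where w: "w \<in> Sph" "\<forall>u\<in>Sph. f w \<le> f u"
    using continuous_attains_inf[OF compact_sphere _ cont] by auto
  have cball: "cball 0 (f w) \<subseteq> wulff f"
  proof
    fix x :: 'a assume "x \<in> cball 0 (f w)"
    moreover obtain u where "u \<in> Sph" "norm x *\<^sub>R u = x"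
      using sphere_polar_decomposition by blast
    ultimately show "x \<in> wulff f"
      using scaleR_in_wulff[OF pos, of u "norm x"] w by force
  qed
  have "ball 0 (f w) \<subseteq> interior (wulff f)"
    using interior_mono[OF cball] by simp
  then have "0 \<in> interior (wulff f)"
    using pos w(1) by auto
  with \<open>compact (wulff f)\<close> show ?thesis
    unfolding convex_bodies_0_def wulff_def by simp
qed

lemma wulff_radial_fun:
  fixes K :: "'a::euclidean_space set"
  assumes K: "K \<in> convex_bodies_0"
  shows "wulff (radial_fun K) = K"
proof
  have "frontier K \<subseteq> K"
    using convex_bodies_0D(1)[OF K] by (simp add: compact_imp_closed frontier_subset_closed)
  moreover have "radial_fun K u *\<^sub>R u \<in> frontier K" if "u \<in> Sph" for u
    by (rule radial_fun_scaleR_in_frontier[OF K]) (use that in auto)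
  ultimately show "wulff (radial_fun K) \<subseteq> K"
    unfolding wulff_def using convex_bodies_0D(2)[OF K] by (intro hull_minimal) auto
  show "K \<subseteq> wulff (radial_fun K)"
  proof
    fix x assume "x \<in> K"
    moreover obtain u where u: "u \<in> Sph" "norm x *\<^sub>R u = x"
      using sphere_polar_decomposition by blast
    ultimately have "norm x \<le> radial_fun K u"
      by (intro le_radial_fun[OF K]) auto
    then have "norm x *\<^sub>R u \<in> wulff (radial_fun K)"
      using u by (intro scaleR_in_wulff ballI radial_fun_gt_0[OF K]) auto
    then show "x \<in> wulff (radial_fun K)"
      using u by simp
  qed
qed

lemma le_radial_fun_wulff:
  fixes f :: "'a::euclidean_space \<Rightarrow> real"
  assumes f: "f \<in> Cplus" and u: "u \<in> Sph"
  shows "f u \<le> radial_fun (wulff f) u"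
proof -
  have "f u *\<^sub>R u \<in> wulff f"
    unfolding wulff_def using u by (intro hull_inc imageI)
  then show ?thesis
    using le_radial_fun[OF wulff_in_convex_bodies_0[OF f]] u
    by (metis norm_zero zero_neq_one mem_sphere_0)
qed

lemma powr_in_Cplus:
  fixes f :: "'a::euclidean_space \<Rightarrow> real"
  assumes "f \<in> Cplus"
  shows "(\<lambda>u. f u powr a) \<in> Cplus"
  using assms unfolding Cplus_def by (auto intro!: continuous_intros)

lemma ln_powr_mean_mono:
  fixes f g :: "'a::euclidean_space \<Rightarrow> real"
  assumes "p \<noteq> 0" and mu: "sphere_measure mu" and f: "f \<in> Cplus" and g: "g \<in> Cplus"
    and le: "\<forall>u\<in>Sph. f u \<le> g u"
  shows "- (1 / p) * ln (1 / measure mu (space mu) * (\<integral>u. f u powr - p \<partial>mu))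
    \<le> - (1 / p) * ln (1 / measure mu (space mu) * (\<integral>u. g u powr - p \<partial>mu))"
proof -
  have fin: "finite_measure mu" and sets: "sets mu = sets (restrict_space borel Sph)"
    and nonzero: "emeasure mu (space mu) \<noteq> 0"
    using mu unfolding sphere_measure_def by auto
  have space: "space mu = Sph"
    using sets_eq_imp_space_eq[OF sets] by (simp add: space_restrict_space)
  have "0 < measure mu (space mu)"
    using nonzero finite_measure.emeasure_eq_measure[OF fin] by (simp add: zero_less_measure_iff)
  then have c: "0 < 1 / measure mu (space mu)"
    by simp
  have integrable: "integrable mu (\<lambda>u. h u powr - p)" and pos: "0 < (\<integral>u. h u powr - p \<partial>mu)"
    if "h \<in> Cplus" for h
    using powr_in_Cplus[OF that, of "- p"] unfolding Cplus_def
    by (auto intro: integrable_continuous_on_compact[OF fin sets compact_sphere]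
        integral_pos_continuous_on_compact[OF fin sets nonzero compact_sphere])
  have ln_mono: "ln (1 / measure mu (space mu) * A) \<le> ln (1 / measure mu (space mu) * B)"
    if "0 < A" "A \<le> B" for A B
    using that c by (simp add: divide_right_mono)
  have fpos: "0 < f u" and le_on_space: "f u \<le> g u" if "u \<in> space mu" for u
    using f le that space unfolding Cplus_def by auto
  consider "0 < p" | "p < 0"
    using \<open>p \<noteq> 0\<close> by linarith
  then show ?thesis
  proof cases
    case 1
    have "(\<integral>u. g u powr - p \<partial>mu) \<le> (\<integral>u. f u powr - p \<partial>mu)"
      using 1 by (intro integral_mono integrable g f powr_mono2') (auto simp: fpos le_on_space)
    then have "ln (1 / measure mu (space mu) * (\<integral>u. g u powr - p \<partial>mu))
      \<le> ln (1 / measure mu (space mu) * (\<integral>u. f u powr - p \<partial>mu))"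
      by (rule ln_mono[OF pos[OF g]])
    then show ?thesis
      using 1 by (intro mult_left_mono_neg) auto
  next
    case 2
    have "(\<integral>u. f u powr - p \<partial>mu) \<le> (\<integral>u. g u powr - p \<partial>mu)"
      using 2 by (intro integral_mono integrable g f powr_mono2)
        (auto simp: fpos le_on_space less_imp_le)
    then have "ln (1 / measure mu (space mu) * (\<integral>u. f u powr - p \<partial>mu))
      \<le> ln (1 / measure mu (space mu) * (\<integral>u. g u powr - p \<partial>mu))"
      by (rule ln_mono[OF pos[OF f]])
    then show ?thesis
      using 2 by (intro mult_left_mono) auto
  qed
qed

lemma Phi_mono:
  fixes f g :: "'a::euclidean_space \<Rightarrow> real"
  assumes "p \<noteq> 0" and "sphere_measure mu" and "f \<in> Cplus" and "g \<in> Cplus"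
    and "wulff f = wulff g" and "\<forall>u\<in>Sph. f u \<le> g u"
  shows "Phi lam mu p f \<le> Phi lam mu p g"
  using ln_powr_mean_mono[OF assms(1-4,6)] unfolding Phi_def assms(5) by linarith

lemma Phi_le_Phi_radial_fun_wulff:
  fixes f :: "'a::euclidean_space \<Rightarrow> real"
  assumes "p \<noteq> 0" and "sphere_measure mu" and f: "f \<in> Cplus"
  shows "Phi lam mu p f \<le> Phi lam mu p (radial_fun (wulff f))"
  using wulff_in_convex_bodies_0[OF f]
  by (intro Phi_mono[OF assms] radial_fun_in_Cplus wulff_radial_fun[symmetric] ballI
      le_radial_fun_wulff[OF f])

theorem lemma5p1:
  fixes lam mu :: "'a::euclidean_space measure" and p :: real and K :: "'a set"
  assumes "p \<noteq> 0"
    and "sphere_measure lam" and "sphere_measure mu"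
    and "K \<in> convex_bodies_0"
  shows "(\<forall>L\<in>convex_bodies_0. Phi lam mu p (radial_fun L) \<le> Phi lam mu p (radial_fun K))
     \<longleftrightarrow> (\<forall>f\<in>Cplus. Phi lam mu p f \<le> Phi lam mu p (radial_fun K))"
proof
  assume max_bodies: "\<forall>L\<in>convex_bodies_0. Phi lam mu p (radial_fun L) \<le> Phi lam mu p (radial_fun K)"
  show "\<forall>f\<in>Cplus. Phi lam mu p f \<le> Phi lam mu p (radial_fun K)"
  proof
    fix f :: "'a \<Rightarrow> real"
    assume f: "f \<in> Cplus"
    have "Phi lam mu p f \<le> Phi lam mu p (radial_fun (wulff f))"
      by (rule Phi_le_Phi_radial_fun_wulff[OF assms(1,3) f])
    also have "\<dots> \<le> Phi lam mu p (radial_fun K)"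
      using max_bodies wulff_in_convex_bodies_0[OF f] by blast
    finally show "Phi lam mu p f \<le> Phi lam mu p (radial_fun K)" .
  qed
next
  assume "\<forall>f\<in>Cplus. Phi lam mu p f \<le> Phi lam mu p (radial_fun K)"
  then show "\<forall>L\<in>convex_bodies_0. Phi lam mu p (radial_fun L) \<le> Phi lam mu p (radial_fun K)"
    using radial_fun_in_Cplus by blast
qed

end
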